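(* Assume $\mu\le1$. Then for every positive integer $r$, $$\mathbf{P}[M\ge r]\le\frac1r.$$
   Context: Let $p=(p_0,p_1,p_2,\dots)$ be a probability distribution on the nonnegative integers with mean $\mu=\sum_k kp_k\in(0,\infty)$, and let $\tau(p)$ be a Galton–Watson tree with offspring distribution $p$: it starts with a single root at generation $0$, and every vertex independently has $k$children with probability $p_k$. The out-degree of a vertex is its number of children. $M$ denotes the global maximal out-degree, i.e. the supremum of the out-degrees of all vertices of $\tau(p)$. *)

theory Defs
  imports "HOL-Probability.Probability"
begin

text \<open>Galton-Watson tree in Ulam-Harris encoding. Vertices are labelled by
finite lists of naturals; the root is the empty list, and the children of u
are u @ [j] for j < (number of children of u). An i.i.d. family X of offspring
counts indexed by all labels determines the tree: u is a vertex iff every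
prefix-step is within the offspring number of its parent.\<close>

definition gw_vertex :: "(nat list \<Rightarrow> 'a \<Rightarrow> nat) \<Rightarrow> 'a \<Rightarrow> nat list \<Rightarrow> bool" where
  "gw_vertex X \<omega> u \<longleftrightarrow> (\<forall>i < length u. u ! i < X (take i u) \<omega>)"

definition gw_maxdeg :: "(nat list \<Rightarrow> 'a \<Rightarrow> nat) \<Rightarrow> 'a \<Rightarrow> enat" where
  "gw_maxdeg X \<omega> = (SUP u \<in> {u. gw_vertex X \<omega> u}. enat (X u \<omega>))"

end

theory Submission
  imports Defs
begin

text \<open>Call a vertex large if its out-degree is at least \<open>r\<close>. If \<open>M \<ge> r\<close>, some large
vertex has no large strict ancestor. For a label \<open>u\<close> of length \<open>n\<close> this happens at \<open>u\<close>
exactly when each ancestor \<open>take i u\<close> has out-degree in \<open>(u!i, r)\<close> and \<open>u\<close> is large; by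
independence its probability is \<open>(\<Prod>i<n. P(u!i < \<xi> < r)) \<cdot> q\<close>, where \<open>\<xi> \<sim> p\<close> and
\<open>q = P(\<xi> \<ge> r)\<close>. Summing over \<open>u \<in> {0..r-1}\<^sup>n\<close> gives \<open>q m\<^sup>n\<close> with
\<open>m = \<Sum>j<r. P(j < \<xi> < r) = \<Sum>k<r. k p\<^sub>k\<close>, and summing over \<open>n\<close> gives \<open>q / (1 - m)\<close>.
Since \<open>m + r q \<le> \<mu> \<le> 1\<close>, this is at most \<open>1 / r\<close>.\<close>

lemma sum_lists_length_prod:
  fixes f :: "'a \<Rightarrow> 'b::comm_semiring_1"
  assumes "finite A"
  shows "(\<Sum>u\<in>{u. set u \<subseteq> A \<and> length u = n}. \<Prod>i<n. f (u!i)) = (\<Sum>a\<in>A. f a) ^ n"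
proof (induction n)
  case 0
  have "{u. set u \<subseteq> A \<and> length u = 0} = {[]}" by auto
  then show ?case by simp
next
  case (Suc n)
  let ?L = "{u. set u \<subseteq> A \<and> length u = n}"
  have inj: "inj_on (\<lambda>(u, a). a # u) (?L \<times> A)"
    by (auto simp: inj_on_def)
  have "(\<Sum>u\<in>{u. set u \<subseteq> A \<and> length u = Suc n}. \<Prod>i<Suc n. f (u!i))
      = (\<Sum>(u, a)\<in>?L \<times> A. f a * (\<Prod>i<n. f (u!i)))"
    unfolding lists_length_Suc_eq
    by (subst sum.reindex[OF inj])
      (simp del: prod.lessThan_Suc add: case_prod_unfold prod.lessThan_Suc_shift)
  also have "\<dots> = (\<Sum>u\<in>?L. \<Sum>a\<in>A. f a * (\<Prod>i<n. f (u!i)))"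
    by (rule sum.cartesian_product[symmetric])
  also have "\<dots> = (\<Sum>u\<in>?L. (\<Sum>a\<in>A. f a) * (\<Prod>i<n. f (u!i)))"
    by (simp add: sum_distrib_right)
  also have "\<dots> = (\<Sum>a\<in>A. f a) * (\<Sum>a\<in>A. f a) ^ n"
    by (simp add: sum_distrib_left[symmetric] Suc)
  finally show ?case by simp
qed

lemma sum_sum_greaterThanLessThan:
  fixes a :: "nat \<Rightarrow> 'b::comm_semiring_1"
  shows "(\<Sum>j<r. \<Sum>k\<in>{j<..<r}. a k) = (\<Sum>k<r. of_nat k * a k)"
proof (induction r)
  case 0
  then show ?case by simp
next
  case (Suc r)
  have "{j<..<Suc r} = (if j < r then insert r {j<..<r} else {})" for j
    by auto
  then have "(\<Sum>j<Suc r. \<Sum>k\<in>{j<..<Suc r}. a k)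
      = (\<Sum>j<r. \<Sum>k\<in>{j<..<r}. a k) + (\<Sum>j<r. a r)"
    by (simp add: sum.distrib add.commute)
  then show ?case by (simp add: Suc)
qed

lemma pmf_nat_sums: "(\<lambda>k. pmf p k) sums 1" for p :: "nat pmf"
proof -
  have "(\<lambda>n. measure p {..<n}) \<longlonglongrightarrow> measure p (\<Union>n. {..<n})"
    by (rule measure_pmf.finite_Lim_measure_incseq) (auto simp: incseq_def)
  moreover have "(\<Union>n. {..<n::nat}) = UNIV" by auto
  ultimately show ?thesis
    by (simp add: sums_def measure_measure_pmf_finite)
qed

lemma measure_pmf_atLeast_nat: "measure p {r..} = (\<Sum>n. pmf p (n + r))" for p :: "nat pmf"
proof -
  have "measure p {r..} = 1 - measure p {..<r}"
    using measure_pmf.prob_compl[of "{..<r}" p] by (simp add: Compl_eq_Diff_UNIV[symmetric])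
  then show ?thesis
    using suminf_split_initial_segment[OF sums_summable[OF pmf_nat_sums], of p r]
      sums_unique[OF pmf_nat_sums, of p]
    by (simp add: measure_measure_pmf_finite)
qed

lemma truncated_mean_plus_tail_le_mean:
  fixes p :: "nat pmf"
  assumes "summable (\<lambda>k. real k * pmf p k)"
  shows "(\<Sum>k<r. real k * pmf p k) + real r * measure p {r..} \<le> (\<Sum>k. real k * pmf p k)"
proof -
  have tail: "summable (\<lambda>n. pmf p (n + r))"
    using summable_ignore_initial_segment[OF sums_summable[OF pmf_nat_sums]] .
  have "real r * measure p {r..} = (\<Sum>n. real r * pmf p (n + r))"
    unfolding measure_pmf_atLeast_nat using tail by (rule suminf_mult[symmetric])
  also have "\<dots> \<le> (\<Sum>n. real (n + r) * pmf p (n + r))"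
    using tail summable_ignore_initial_segment[OF assms, of r]
    by (intro suminf_le summable_mult) (auto intro: mult_right_mono)
  finally show ?thesis
    using suminf_split_initial_segment[OF assms, of r] by simp
qed

lemma geometric_series_le_inverse:
  fixes q m :: real
  assumes "q \<ge> 0" "m \<ge> 0" "m + real r * q \<le> 1" "r > 0"
  shows "summable (\<lambda>n. q * m ^ n)" "(\<Sum>n. q * m ^ n) \<le> 1 / real r"
proof -
  have "summable (\<lambda>n. q * m ^ n) \<and> (\<Sum>n. q * m ^ n) \<le> 1 / real r"
  proof (cases "q = 0")
    case False
    with assms have "real r * q > 0"
      by simp
    with assms(3) have "m < 1"
      by linarith
    then have "(\<lambda>n. q * m ^ n) sums (q * (1 / (1 - m)))"
      using geometric_sums[of m] assms(2) by (intro sums_mult) simp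
    moreover have "q * (1 / (1 - m)) \<le> 1 / real r"
      using assms \<open>m < 1\<close> by (simp add: divide_simps mult.commute)
    ultimately show ?thesis
      by (simp add: sums_iff)
  qed simp
  then show "summable (\<lambda>n. q * m ^ n)" "(\<Sum>n. q * m ^ n) \<le> 1 / real r"
    by simp_all
qed

definition gw_first_large :: "nat \<Rightarrow> (nat list \<Rightarrow> 'a \<Rightarrow> nat) \<Rightarrow> 'a \<Rightarrow> nat list \<Rightarrow> bool" where
  "gw_first_large r X \<omega> u \<longleftrightarrow>
     gw_vertex X \<omega> u \<and> (\<forall>i < length u. X (take i u) \<omega> < r) \<and> r \<le> X u \<omega>"

lemma gw_vertex_take: "gw_vertex X \<omega> u \<Longrightarrow> gw_vertex X \<omega> (take n u)"
  by (simp add: gw_vertex_def)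

lemma gw_first_large_exists:
  assumes "gw_vertex X \<omega> v" "r \<le> X v \<omega>"
  shows "\<exists>u. gw_first_large r X \<omega> u"
  using assms
proof (induction v rule: length_induct)
  case (1 v)
  show ?case
  proof (cases "\<exists>i < length v. r \<le> X (take i v) \<omega>")
    case True
    then obtain i where "i < length v" "r \<le> X (take i v) \<omega>" by blast
    moreover have "length (take i v) < length v"
      using \<open>i < length v\<close> by simp
    ultimately show ?thesis
      using "1.IH" gw_vertex_take[OF "1.prems"(1)] by blast
  next
    case False
    then show ?thesis
      using "1.prems" unfolding gw_first_large_def by (auto simp: not_le)
  qed
qed

lemma gw_maxdeg_geD:
  assumes "enat r \<le> gw_maxdeg X \<omega>"
  shows "\<exists>v. gw_vertex X \<omega> v \<and> r \<le> X v \<omega>"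
proof (rule ccontr)
  assume "\<not> ?thesis"
  then have small: "gw_vertex X \<omega> v \<Longrightarrow> X v \<omega> < r" for v
    by (simp add: not_le)
  have "r > 0"
    using small[of "[]"] by (simp add: gw_vertex_def)
  with small have "gw_maxdeg X \<omega> \<le> enat (r - 1)"
    unfolding gw_maxdeg_def by (intro SUP_least) fastforce
  with assms \<open>r > 0\<close> show False
    by (metis order.trans enat_ord_simps(1) diff_less zero_less_one not_le)
qed

lemma gw_first_large_set:
  assumes "gw_first_large r X \<omega> u"
  shows "set u \<subseteq> {..<r}"
proof
  fix a assume "a \<in> set u"
  then obtain i where "i < length u" "a = u ! i"
    by (auto simp: in_set_conv_nth)
  with assms show "a \<in> {..<r}"
    unfolding gw_first_large_def gw_vertex_def by fastforce
qed

locale galton_watson = prob_space M for M :: "'a measure" +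
  fixes p :: "nat pmf" and X :: "nat list \<Rightarrow> 'a \<Rightarrow> nat"
  assumes indep_offspring: "indep_vars (\<lambda>_. count_space UNIV) X UNIV"
    and offspring_law: "\<And>u k. prob {\<omega> \<in> space M. X u \<omega> = k} = pmf p k"
begin

lemma measurable_offspring [measurable]: "X u \<in> measurable M (count_space UNIV)"
  using indep_offspring unfolding indep_vars_def by auto

lemma distr_offspring: "distr M (count_space UNIV) (X u) = measure_pmf p"
proof (rule measure_eqI_countable[where A = UNIV])
  fix k :: nat
  have "X u -` {k} \<inter> space M = {\<omega> \<in> space M. X u \<omega> = k}" by auto
  then show "emeasure (distr M (count_space UNIV) (X u)) {k} = emeasure (measure_pmf p) {k}"
    using offspring_law[of u k] by (simp add: emeasure_distr emeasure_eq_measure emeasure_pmf_single)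
qed auto

lemma prob_offspring_in: "prob (X u -` S \<inter> space M) = measure p S"
  using measure_distr[of "X u" M "count_space UNIV" S] by (simp add: distr_offspring)

lemma sets_first_large: "{\<omega> \<in> space M. gw_first_large r X \<omega> u} \<in> events"
  unfolding gw_first_large_def gw_vertex_def by measurable

lemma prob_first_large:
  "prob {\<omega> \<in> space M. gw_first_large r X \<omega> u}
     = (\<Prod>i<length u. measure p {u!i<..<r}) * measure p {r..}"
proof -
  define n where "n = length u"
  define T where "T w = (if length w < n then {u ! length w<..<r} else {r..})" for w :: "nat list"
  define J where "J = (\<lambda>i. take i u) ` {..n}"
  have inj: "inj_on (\<lambda>i. take i u) {..n}"
    by (rule inj_onI) (metis atMost_iff length_take min.absorb2 n_def)
  have "(\<forall>i\<le>n. X (take i u) \<omega> \<in> T (take i u)) \<longleftrightarrow> gw_first_large r X \<omega> u" for \<omega>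
    unfolding gw_first_large_def gw_vertex_def T_def n_def
    by (auto simp: le_less min_def)
  then have "{\<omega> \<in> space M. gw_first_large r X \<omega> u} = (\<Inter>w\<in>J. X w -` T w \<inter> space M)"
    unfolding J_def by auto
  then have "prob {\<omega> \<in> space M. gw_first_large r X \<omega> u} = (\<Prod>w\<in>J. prob (X w -` T w \<inter> space M))"
    by (simp only:) (rule indep_varsD[OF indep_offspring], auto simp: J_def)
  also have "\<dots> = (\<Prod>i\<le>n. measure p (T (take i u)))"
    unfolding J_def prod.reindex[OF inj] by (simp add: prob_offspring_in)
  also have "\<dots> = (\<Prod>i<n. measure p {u!i<..<r}) * measure p {r..}"
    by (simp add: lessThan_Suc_atMost[symmetric] T_def n_def min_def)
  finally show ?thesis by (simp add: n_def)
qed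

lemma first_large_at_level_eq_UN:
  "{\<omega> \<in> space M. \<exists>u. length u = n \<and> gw_first_large r X \<omega> u}
     = (\<Union>u\<in>{u. set u \<subseteq> {..<r} \<and> length u = n}. {\<omega> \<in> space M. gw_first_large r X \<omega> u})"
  using gw_first_large_set by fastforce

lemma sets_first_large_at_level:
  "{\<omega> \<in> space M. \<exists>u. length u = n \<and> gw_first_large r X \<omega> u} \<in> events"
  unfolding first_large_at_level_eq_UN
  by (rule sets.finite_UN) (simp_all add: finite_lists_length_eq sets_first_large)

lemma prob_first_large_at_level:
  "prob {\<omega> \<in> space M. \<exists>u. length u = n \<and> gw_first_large r X \<omega> u}
     \<le> measure p {r..} * (\<Sum>k<r. real k * pmf p k) ^ n"
proof -
  define L where "L = {u. set u \<subseteq> {..<r} \<and> length u = n}"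
  have "finite L"
    unfolding L_def by (rule finite_lists_length_eq) simp
  have "prob {\<omega> \<in> space M. \<exists>u. length u = n \<and> gw_first_large r X \<omega> u}
      = prob (\<Union>u\<in>L. {\<omega> \<in> space M. gw_first_large r X \<omega> u})"
    unfolding L_def first_large_at_level_eq_UN ..
  also have "\<dots> \<le> (\<Sum>u\<in>L. prob {\<omega> \<in> space M. gw_first_large r X \<omega> u})"
    using \<open>finite L\<close> sets_first_large by (intro finite_measure_subadditive_finite) auto
  also have "\<dots> = measure p {r..} * (\<Sum>u\<in>L. \<Prod>i<n. measure p {u!i<..<r})"
    unfolding sum_distrib_left by (intro sum.cong) (auto simp: prob_first_large L_def)
  also have "\<dots> = measure p {r..} * (\<Sum>j<r. measure p {j<..<r}) ^ n"
    unfolding L_def using sum_lists_length_prod[of "{..<r}" "\<lambda>j. measure p {j<..<r}" n] by simp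
  also have "(\<Sum>j<r. measure p {j<..<r}) = (\<Sum>k<r. real k * pmf p k)"
    by (simp add: measure_measure_pmf_finite sum_sum_greaterThanLessThan)
  finally show ?thesis .
qed

theorem prob_maxdeg_ge_le:
  assumes "summable (\<lambda>k. real k * pmf p k)" "(\<Sum>k. real k * pmf p k) \<le> 1" "r > 0"
  shows "prob {\<omega> \<in> space M. enat r \<le> gw_maxdeg X \<omega>} \<le> 1 / real r"
proof -
  define q where "q = measure p {r..}"
  define m where "m = (\<Sum>k<r. real k * pmf p k)"
  define B where "B n = {\<omega> \<in> space M. \<exists>u. length u = n \<and> gw_first_large r X \<omega> u}" for n
  have B_events: "B n \<in> events" for n
    unfolding B_def by (rule sets_first_large_at_level)
  have "q \<ge> 0" "m \<ge> 0"
    unfolding q_def m_def by (simp_all add: sum_nonneg)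
  moreover have "m + real r * q \<le> 1"
    using truncated_mean_plus_tail_le_mean[OF assms(1), of r] assms(2) unfolding m_def q_def by linarith
  ultimately have geo: "summable (\<lambda>n. q * m ^ n)" "(\<Sum>n. q * m ^ n) \<le> 1 / real r"
    using geometric_series_le_inverse[OF _ _ _ assms(3)] by simp_all
  have B_le: "prob (B n) \<le> q * m ^ n" for n
    unfolding B_def q_def m_def by (rule prob_first_large_at_level)
  have summable_B: "summable (\<lambda>n. prob (B n))"
    using B_le by (intro summable_comparison_test[OF _ geo(1)]) auto
  have "{\<omega> \<in> space M. enat r \<le> gw_maxdeg X \<omega>} \<subseteq> (\<Union>n. B n)"
  proof
    fix \<omega> assume "\<omega> \<in> {\<omega> \<in> space M. enat r \<le> gw_maxdeg X \<omega>}"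
    then have "\<omega> \<in> space M" "enat r \<le> gw_maxdeg X \<omega>" by simp_all
    obtain v where "gw_vertex X \<omega> v" "r \<le> X v \<omega>"
      using gw_maxdeg_geD[OF \<open>enat r \<le> gw_maxdeg X \<omega>\<close>] by blast
    obtain u where "gw_first_large r X \<omega> u"
      using gw_first_large_exists[OF \<open>gw_vertex X \<omega> v\<close> \<open>r \<le> X v \<omega>\<close>] ..
    then have "\<omega> \<in> B (length u)"
      unfolding B_def using \<open>\<omega> \<in> space M\<close> by blast
    then show "\<omega> \<in> (\<Union>n. B n)" by blast
  qed
  then have "prob {\<omega> \<in> space M. enat r \<le> gw_maxdeg X \<omega>} \<le> prob (\<Union>n. B n)"
    using B_events by (intro finite_measure_mono) auto
  also have "\<dots> \<le> (\<Sum>n. prob (B n))"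
    using B_events summable_B by (intro finite_measure_subadditive_countably) auto
  also have "\<dots> \<le> (\<Sum>n. q * m ^ n)"
    using B_le summable_B geo(1) by (rule suminf_le)
  finally show ?thesis
    using geo(2) by linarith
qed

end

theorem lemma2p7:
  fixes M :: "'a measure" and p :: "nat pmf" and X :: "nat list \<Rightarrow> 'a \<Rightarrow> nat" and r :: nat
  assumes "prob_space M"
    and "prob_space.indep_vars M (\<lambda>_. count_space UNIV) X UNIV"
    and "\<And>u k. measure M {\<omega> \<in> space M. X u \<omega> = k} = pmf p k"
    and "summable (\<lambda>k. real k * pmf p k)"
    and "(\<Sum>k. real k * pmf p k) > 0"
    and "(\<Sum>k. real k * pmf p k) \<le> 1"
    and "r \<ge> 1"
  shows "measure M {\<omega> \<in> space M. enat r \<le> gw_maxdeg X \<omega>} \<le> 1 / real r"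
proof -
  interpret galton_watson M p X
    using assms(1-3) by (simp add: galton_watson_def galton_watson_axioms_def)
  show ?thesis
    using assms(4,6,7) by (intro prob_maxdeg_ge_le) auto
qed

end
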